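(* In the setting described in the context, suppose the weighted design matrix $A_w\in\mathbb{R}^{T\times k}$ has full column rank. Then the least-squares estimator $\hat{\mathbf f}=(A_w^{\top}A_w)^{-1}A_w^{\top}\tilde{\mathbf s}$ satisfies $\mathbb{E}[\hat{\mathbf f}]=\mathbf f$, where the expectation is over the randomness of the users' reports, taken conditionally on the block counts $(n_0,\dots,n_{\ell-1})$ (all assumed $\ge 1$).
   Context: Domain $[k]=\{0,\dots,k-1\}$, privacy parameter $\varepsilon>0$, pairwise-coprime integer moduli $m_0,\dots,m_{\ell-1}\ge 2$. For each $j$, $\omega_j$ is the nearest integer to $m_j/(e^{\varepsilon}+1)$, $p_j=\frac{\omega_j e^{\varepsilon}}{\omega_j e^{\varepsilon}+m_j-\omega_j}$, and $q_j=\frac{\omega_j e^{\varepsilon}(\omega_j-1)+(m_j-\omega_j)\omega_j}{(m_j-1)(\omega_j e^{\varepsilon}+m_j-\omega_j)}$. There are $n$ users with values $x_1,\dots,x_n\in[k]$, and $\mathbf f\in\mathbb{R}^k$ with $f_v=\#\{i:x_i=v\}/n$. Each user independently runs the following mechanism on its value $x$: draw $J$ uniform on $\{0,\dots,\ell-1\}$; set $r=x\bmod m_J$; with probability $p_J$ report $Z=\{r\}\cup S$ with $S$ a uniformly random $(\omega_J-1)$-subset of $\{0,\dots,m_J-1\}\setminus\{r\}$, otherwise report $Z$ a uniformly random $\omega_J$-subset of $\{0,\dots,m_J-1\}\setminus\{r\}$; the report is $(J,Z)$. Server: $n_j$ is the number of reports with $J=j$; $c_j\in\mathbb{R}^{m_j}$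 with $c_j[a]$ the number of reports with $J=j$ and $a\in Z$; $\bar y_j=c_j/n_j$; $\hat s_j=(\bar y_j-q_j\mathbf 1)/(p_j-q_j)$; $\mathbf s\in\mathbb{R}^T$ stacks $\hat s_0,\dots,\hat s_{\ell-1}$, with $T=\sum_j m_j$. Let $\pi_j=q_j+(p_j-q_j)/m_j$ and $w_j=\frac{(p_j-q_j)^2 n_j}{\pi_j(1-\pi_j)}$; let $W^{1/2}$ be the $T\times T$ diagonal matrix whose entries are $\sqrt{w_0}$ repeated $m_0$ times, ..., $\sqrt{w_{\ell-1}}$ repeated $m_{\ell-1}$ times. For each $j$, $A_j\in\{0,1\}^{m_j\times k}$ has $A_j[r,x]=1$ iff $x\bmod m_j=r$; $A\in\{0,1\}^{T\times k}$ stacks $A_0,\dots,A_{\ell-1}$ vertically; $A_w=W^{1/2}A$ and $\tilde{\mathbf s}=W^{1/2}\mathbf s$. *)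

theory Defs
  imports "HOL-Probability.Probability" "Jordan_Normal_Form.Matrix"
    "Jordan_Normal_Form.Gauss_Jordan_Elimination" "Jordan_Normal_Form.DL_Rank"
begin

text \<open>Parameters: eps (privacy), moduli m 0, ..., m (l-1), number of blocks l.
  A report is a pair (J, Z) with J a block index and Z a set of residues.\<close>

type_synonym report = "nat \<times> nat set"

definition omega :: "real \<Rightarrow> (nat \<Rightarrow> nat) \<Rightarrow> nat \<Rightarrow> nat" where
  "omega eps m j = nat (round (real (m j) / (exp eps + 1)))"

definition pp :: "real \<Rightarrow> (nat \<Rightarrow> nat) \<Rightarrow> nat \<Rightarrow> real" where
  "pp eps m j = (let w = real (omega eps m j); mj = real (m j) in
     w * exp eps / (w * exp eps + mj - w))"

definition qq :: "real \<Rightarrow> (nat \<Rightarrow> nat) \<Rightarrow> nat \<Rightarrow> real" where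
  "qq eps m j = (let w = real (omega eps m j); mj = real (m j) in
     (w * exp eps * (w - 1) + (mj - w) * w) / ((mj - 1) * (w * exp eps + mj - w)))"

definition mech :: "real \<Rightarrow> (nat \<Rightarrow> nat) \<Rightarrow> nat \<Rightarrow> nat \<Rightarrow> report pmf" where
  "mech eps m l x = do {
     J \<leftarrow> pmf_of_set {0..<l};
     let r = x mod m J;
     b \<leftarrow> bernoulli_pmf (pp eps m J);
     if b then do {
       S \<leftarrow> pmf_of_set {S. S \<subseteq> {0..<m J} - {r} \<and> card S = omega eps m J - 1};
       return_pmf (J, insert r S) }
     else do {
       Z \<leftarrow> pmf_of_set {Z. Z \<subseteq> {0..<m J} - {r} \<and> card Z = omega eps m J};
       return_pmf (J, Z) } }"

definition reports :: "real \<Rightarrow> (nat \<Rightarrow> nat) \<Rightarrow> nat \<Rightarrow> nat \<Rightarrow> (nat \<Rightarrow> nat) \<Rightarrow> (nat \<Rightarrow> report) pmf" where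
  "reports eps m l n x = Pi_pmf {0..<n} (0, {}) (\<lambda>i. mech eps m l (x i))"

definition blockcount :: "nat \<Rightarrow> (nat \<Rightarrow> report) \<Rightarrow> nat \<Rightarrow> nat" where
  "blockcount n \<rho> j = card {i. i < n \<and> fst (\<rho> i) = j}"

definition cnt :: "nat \<Rightarrow> (nat \<Rightarrow> report) \<Rightarrow> nat \<Rightarrow> nat \<Rightarrow> nat" where
  "cnt n \<rho> j a = card {i. i < n \<and> fst (\<rho> i) = j \<and> a \<in> snd (\<rho> i)}"

definition shat :: "real \<Rightarrow> (nat \<Rightarrow> nat) \<Rightarrow> nat \<Rightarrow> (nat \<Rightarrow> report) \<Rightarrow> nat \<Rightarrow> nat \<Rightarrow> real" where
  "shat eps m n \<rho> j a =
     (real (cnt n \<rho> j a) / real (blockcount n \<rho> j) - qq eps m j) / (pp eps m j - qq eps m j)"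

definition piv :: "real \<Rightarrow> (nat \<Rightarrow> nat) \<Rightarrow> nat \<Rightarrow> real" where
  "piv eps m j = qq eps m j + (pp eps m j - qq eps m j) / real (m j)"

definition wt :: "real \<Rightarrow> (nat \<Rightarrow> nat) \<Rightarrow> (nat \<Rightarrow> nat) \<Rightarrow> nat \<Rightarrow> real" where
  "wt eps m nj j = (pp eps m j - qq eps m j)^2 * real (nj j) / (piv eps m j * (1 - piv eps m j))"

text \<open>Stacking: row t of the T x k matrix corresponds to block blk t, residue pos t.\<close>
definition offset :: "(nat \<Rightarrow> nat) \<Rightarrow> nat \<Rightarrow> nat" where
  "offset m j = (\<Sum>i<j. m i)"

definition TT :: "(nat \<Rightarrow> nat) \<Rightarrow> nat \<Rightarrow> nat" where
  "TT m l = offset m l"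

definition blk :: "(nat \<Rightarrow> nat) \<Rightarrow> nat \<Rightarrow> nat" where
  "blk m t = (LEAST j. t < offset m (Suc j))"

definition pos :: "(nat \<Rightarrow> nat) \<Rightarrow> nat \<Rightarrow> nat" where
  "pos m t = t - offset m (blk m t)"

definition Amat :: "(nat \<Rightarrow> nat) \<Rightarrow> nat \<Rightarrow> nat \<Rightarrow> real mat" where
  "Amat m l k = mat (TT m l) k (\<lambda>(t, v). if v mod m (blk m t) = pos m t then 1 else 0)"

definition Aw :: "real \<Rightarrow> (nat \<Rightarrow> nat) \<Rightarrow> nat \<Rightarrow> nat \<Rightarrow> (nat \<Rightarrow> nat) \<Rightarrow> real mat" where
  "Aw eps m l k nj = mat (TT m l) k
     (\<lambda>(t, v). sqrt (wt eps m nj (blk m t)) * Amat m l k $$ (t, v))"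

definition stilde :: "real \<Rightarrow> (nat \<Rightarrow> nat) \<Rightarrow> nat \<Rightarrow> nat \<Rightarrow> (nat \<Rightarrow> report) \<Rightarrow> real vec" where
  "stilde eps m l n \<rho> = vec (TT m l)
     (\<lambda>t. sqrt (wt eps m (blockcount n \<rho>) (blk m t)) * shat eps m n \<rho> (blk m t) (pos m t))"

definition fhat :: "real \<Rightarrow> (nat \<Rightarrow> nat) \<Rightarrow> nat \<Rightarrow> nat \<Rightarrow> nat \<Rightarrow> (nat \<Rightarrow> report) \<Rightarrow> real vec" where
  "fhat eps m l k n \<rho> =
     (let A = Aw eps m l k (blockcount n \<rho>) in
      the (mat_inverse (transpose_mat A * A)) *\<^sub>v (transpose_mat A *\<^sub>v stilde eps m l n \<rho>))"

end

theory Submission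
  imports Defs
begin

(* Conditioned on the block counts n_j, the weights and hence A_w are fixed, and the estimator is
   f^ = M s~ for the fixed left inverse M = (A_w^T A_w)^-1 A_w^T of A_w.  By linearity it suffices
   that E[s~] = A_w f, i.e. that every hat s_j is unbiased for A_j f.  The conditioning event only
   involves the block indices J_1, ..., J_n, which are exchangeable, so each user lies in block j
   with conditional probability n_j / n; given that, and independently of the other users, its
   report contains residue a with probability p_j if x mod m_j = a and q_j otherwise.  Hence
   E[c_j[a]] = n_j (q_j + (p_j - q_j) (A_j f)[a]), which is the unbiasedness of hat s_j. *)

lemma real_scalar_prod_self_eq_0_iff:
  fixes v :: "real vec"
  assumes "v \<in> carrier_vec n"
  shows "v \<bullet> v = 0 \<longleftrightarrow> v = 0\<^sub>v n"
proof -
  have "conjugate v = v" by (rule eq_vecI) auto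
  then show ?thesis using conjugate_square_eq_0_vec[OF assms] by simp
qed

lemma (in vec_space) full_rank_mult_vec_eq_0:
  assumes A: "A \<in> carrier_mat n k" and r: "rank A = k"
    and v: "v \<in> carrier_vec k" and Av: "A *\<^sub>v v = 0\<^sub>v n"
  shows "v = 0\<^sub>v k"
proof (rule ccontr)
  assume nz: "v \<noteq> 0\<^sub>v k"
  show False
  proof (cases "distinct (cols A)")
    case True
    show False using full_rank_lin_indpt[OF A r True] lin_depI[OF A v nz Av True] by simp
  next
    case False
    obtain S where S: "maximal S (\<lambda>T. T \<subseteq> set (cols A) \<and> lin_indpt T)"
      using maximal_exists[of "(\<lambda>T. T \<subseteq> set (cols A) \<and> lin_indpt T)" "card (set (cols A))" "{}"]
      by (meson List.finite_set card_mono empty_iff empty_subsetI finite_lin_indpt2 rev_finite_subset)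
    then have "card S \<le> card (set (cols A))" by (simp add: card_mono maximal_def)
    also have "card (set (cols A)) < k"
      using A False card_distinct cols_length card_length carrier_matD(2) nat_less_le
      by metis
    finally show False using rank_card_indpt[OF A S] r by simp
  qed
qed

lemma gram_mat_inverse:
  fixes A :: "real mat"
  assumes A: "A \<in> carrier_mat n k" and r: "vec_space.rank n A = k"
  obtains B where "mat_inverse (A\<^sup>T * A) = Some B" "B * (A\<^sup>T * A) = 1\<^sub>m k" "B \<in> carrier_mat k k"
proof -
  let ?G = "A\<^sup>T * A"
  have G: "?G \<in> carrier_mat k k" using A by auto
  have "v = 0\<^sub>v k" if v: "v \<in> carrier_vec k" and Gv: "?G *\<^sub>v v = 0\<^sub>v k" for v
  proof -
    have "(A *\<^sub>v v) \<bullet> (A *\<^sub>v v) = (?G *\<^sub>v v) \<bullet> v"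
      using A v by (simp add: assoc_mult_mat_vec transpose_vec_mult_scalar)
    then have "A *\<^sub>v v = 0\<^sub>v n"
      using A v Gv by (simp add: real_scalar_prod_self_eq_0_iff[of _ n])
    then show ?thesis using vec_space.full_rank_mult_vec_eq_0[OF A r v] by simp
  qed
  then have "det ?G \<noteq> 0" using det_0_iff_vec_prod_zero_field[OF G] by blast
  then have "?G \<in> Units (ring_mat TYPE(real) k ())" by (rule det_non_zero_imp_unit[OF G])
  then obtain B where "mat_inverse ?G = Some B"
    using mat_inverse(1)[OF G, where b="()"] by (cases "mat_inverse ?G") auto
  with mat_inverse(2)[OF G] that show ?thesis by blast
qed

lemma integral_index_mult_mat_vec:
  fixes X :: "'a \<Rightarrow> real vec"
  assumes M: "M \<in> carrier_mat k T" and i: "i < k"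
    and X: "\<And>\<omega>. X \<omega> \<in> carrier_vec T"
    and int: "\<And>t. t < T \<Longrightarrow> integrable \<mu> (\<lambda>\<omega>. X \<omega> $ t)"
  shows "(\<integral>\<omega>. (M *\<^sub>v X \<omega>) $ i \<partial>\<mu>) = (M *\<^sub>v vec T (\<lambda>t. \<integral>\<omega>. X \<omega> $ t \<partial>\<mu>)) $ i"
proof -
  have "(M *\<^sub>v X \<omega>) $ i = (\<Sum>t<T. M $$ (i, t) * X \<omega> $ t)" for \<omega>
    using M i X[of \<omega>] by (simp add: scalar_prod_def atLeast0LessThan)
  then have "(\<integral>\<omega>. (M *\<^sub>v X \<omega>) $ i \<partial>\<mu>) = (\<integral>\<omega>. (\<Sum>t<T. M $$ (i, t) * X \<omega> $ t) \<partial>\<mu>)"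
    by simp
  also have "\<dots> = (\<Sum>t<T. M $$ (i, t) * (\<integral>\<omega>. X \<omega> $ t \<partial>\<mu>))"
    using int by (subst Bochner_Integration.integral_sum) auto
  also have "\<dots> = (M *\<^sub>v vec T (\<lambda>t. \<integral>\<omega>. X \<omega> $ t \<partial>\<mu>)) $ i"
    using M i by (simp add: scalar_prod_def atLeast0LessThan)
  finally show ?thesis .
qed

lemma measure_bind_pmf_eq_expectation:
  "measure_pmf.prob (bind_pmf M N) X = measure_pmf.expectation M (\<lambda>x. measure_pmf.prob (N x) X)"
proof -
  have int: "integrable M (\<lambda>x. measure_pmf.prob (N x) X)"
    by (intro measure_pmf.integrable_const_bound[where B=1]) auto
  have "ennreal (measure_pmf.prob (bind_pmf M N) X) = (\<integral>\<^sup>+x. emeasure (N x) X \<partial>M)"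
    by (simp add: measure_pmf.emeasure_eq_measure[symmetric] emeasure_bind_pmf)
  also have "\<dots> = ennreal (measure_pmf.expectation M (\<lambda>x. measure_pmf.prob (N x) X))"
    by (simp add: measure_pmf.emeasure_eq_measure nn_integral_eq_integral[OF int])
  finally show ?thesis
    by (subst (asm) ennreal_inj) (auto intro: Bochner_Integration.integral_nonneg)
qed

lemma measure_pair_pmf_Times:
  "measure_pmf.prob (pair_pmf M N) (A \<times> B) = measure_pmf.prob M A * measure_pmf.prob N B"
proof -
  have "(A \<times> B) \<inter> set_pmf (pair_pmf M N) = (A \<inter> set_pmf M) \<times> (B \<inter> set_pmf N)" by auto
  then have "measure_pmf.prob (pair_pmf M N) (A \<times> B)
      = measure_pmf.prob (pair_pmf M N) ((A \<inter> set_pmf M) \<times> (B \<inter> set_pmf N))"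
    by (metis measure_Int_set_pmf)
  also have "\<dots> = measure_pmf.prob M (A \<inter> set_pmf M) * measure_pmf.prob N (B \<inter> set_pmf N)"
    by (intro measure_pmf_prob_product) auto
  finally show ?thesis by (simp add: measure_Int_set_pmf)
qed

lemma measure_cond_pmf:
  assumes "set_pmf p \<inter> s \<noteq> {}"
  shows "measure_pmf.prob (cond_pmf p s) A = measure_pmf.prob p (A \<inter> s) / measure_pmf.prob p s"
  unfolding cond_pmf.rep_eq[OF assms] Int_commute[of A]
  by (rule measure_uniform_measure)
    (use assms in \<open>auto simp: measure_pmf.emeasure_eq_measure measure_pmf_zero_iff\<close>)

lemma expectation_card_events:
  assumes "finite I"
  shows "measure_pmf.expectation M (\<lambda>\<omega>. real (card {i\<in>I. \<omega> \<in> A i}))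
    = (\<Sum>i\<in>I. measure_pmf.prob M (A i))"
proof -
  have "real (card {i\<in>I. \<omega> \<in> A i}) = (\<Sum>i\<in>I. if \<omega> \<in> A i then 1 else 0)" for \<omega>
    by (subst sum.inter_filter[OF assms, symmetric]) simp
  then have "real (card {i\<in>I. \<omega> \<in> A i}) = (\<Sum>i\<in>I. indicator (A i) \<omega>)" for \<omega>
    by (simp add: indicator_def of_bool_def)
  then show ?thesis
    by (simp add: less_top[symmetric] Bochner_Integration.integral_sum)
qed

lemma sum_if_eq_card:
  fixes p q :: real
  shows "(\<Sum>i<n. if P i then p else q) = real n * q + (p - q) * real (card {i. i < n \<and> P i})"
proof -
  have "(\<Sum>i<n. if P i then p else q) = (\<Sum>i<n. q + (p - q) * of_bool (P i))"
    by (intro sum.cong) auto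
  moreover have "{..<n} \<inter> {i. P i} = {i. i < n \<and> P i}" by auto
  ultimately show ?thesis by (simp add: sum.distrib flip: sum_distrib_left)
qed

lemma sum_card_fibres_mod:
  fixes x :: "nat \<Rightarrow> nat"
  assumes x: "\<And>i. i < n \<Longrightarrow> x i < k"
  shows "(\<Sum>y<k. if y mod M = a then real (card {i. i < n \<and> x i = y}) else 0)
    = real (card {i. i < n \<and> x i mod M = a})"
proof -
  have card_eq: "real (card {i. i < n \<and> P i}) = (\<Sum>i<n. of_bool (P i))" for P
  proof -
    have "{i. i < n \<and> P i} = {..<n} \<inter> {i. P i}" by auto
    then show ?thesis by simp
  qed
  have "(\<Sum>y<k. if y mod M = a then real (card {i. i < n \<and> x i = y}) else 0)
      = (\<Sum>y<k. \<Sum>i<n. of_bool (x i = y \<and> y mod M = a))"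
    by (intro sum.cong refl) (simp add: card_eq)
  also have "\<dots> = (\<Sum>i<n. \<Sum>y<k. of_bool (x i = y \<and> y mod M = a))"
    by (rule sum.swap)
  also have "\<dots> = (\<Sum>i<n. \<Sum>y<k. if x i = y then of_bool (x i mod M = a) else 0)"
    by (intro sum.cong refl) auto
  also have "\<dots> = (\<Sum>i<n. of_bool (x i mod M = a))"
    using x by (simp add: sum.delta')
  finally show ?thesis by (simp add: card_eq)
qed

lemma card_subsets_mem:
  assumes B: "finite B" and a: "a \<in> B"
  shows "card {S. S \<subseteq> B \<and> card S = k \<and> a \<in> S} * card B = k * card {S. S \<subseteq> B \<and> card S = k}"
proof (cases "k = 0")
  case True
  then have "{S. S \<subseteq> B \<and> card S = k \<and> a \<in> S} = {}"
    using B by (auto dest: finite_subset)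
  then have "card {S. S \<subseteq> B \<and> card S = k \<and> a \<in> S} = 0" by (simp only: card.empty)
  then show ?thesis using True by simp
next
  case False
  have "{S. S \<subseteq> B \<and> card S = k \<and> a \<in> S} = insert a ` {S. S \<subseteq> B - {a} \<and> card S = k - 1}"
  proof (intro equalityI subsetI)
    fix S assume S: "S \<in> {S. S \<subseteq> B \<and> card S = k \<and> a \<in> S}"
    then have "S = insert a (S - {a})" "card (S - {a}) = k - 1"
      using finite_subset[OF _ B] by auto
    then show "S \<in> insert a ` {S. S \<subseteq> B - {a} \<and> card S = k - 1}" using S by blast
  next
    fix S assume "S \<in> insert a ` {S. S \<subseteq> B - {a} \<and> card S = k - 1}"
    then obtain R where R: "R \<subseteq> B - {a}" "card R = k - 1" "S = insert a R" by auto
    moreover have "finite R" "a \<notin> R" using R(1) finite_subset[OF _ B, of R] by auto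
    ultimately have "card S = k" using False by simp
    then show "S \<in> {S. S \<subseteq> B \<and> card S = k \<and> a \<in> S}" using R a by auto
  qed
  moreover have "inj_on (insert a) {S. S \<subseteq> B - {a} \<and> card S = k - 1}"
    by (rule inj_onI) (metis Diff_insert_absorb mem_Collect_eq subset_Diff_insert)
  ultimately have "card {S. S \<subseteq> B \<and> card S = k \<and> a \<in> S} = (card B - 1) choose (k - 1)"
    using B a by (simp add: card_image n_subsets card_Diff_singleton)
  then show ?thesis
    using B times_binomial_minus1_eq[of k "card B"] False by (simp add: n_subsets mult.commute)
qed

lemma prob_pmf_of_subsets_mem:
  assumes B: "finite B" and a: "a \<in> B" and k: "k \<le> card B"
  shows "measure_pmf.prob (pmf_of_set {S. S \<subseteq> B \<and> card S = k}) {S. a \<in> S}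
    = real k / real (card B)"
proof -
  let ?F = "{S. S \<subseteq> B \<and> card S = k}" and ?Fa = "{S. S \<subseteq> B \<and> card S = k \<and> a \<in> S}"
  have "card ?F = card B choose k" using B by (simp add: n_subsets)
  then have F: "card ?F > 0" using k by simp
  then have "?F \<noteq> {}" "finite ?F" by (auto simp: card_gt_0_iff)
  moreover have "?F \<inter> {S. a \<in> S} = ?Fa" by auto
  ultimately have "measure_pmf.prob (pmf_of_set ?F) {S. a \<in> S} = real (card ?Fa) / real (card ?F)"
    by (simp add: measure_pmf_of_set)
  moreover have "real (card ?Fa) = real k * real (card ?F) / real (card B)"
    using card_subsets_mem[OF B a, of k] B a
    by (simp add: eq_divide_eq card_gt_0_iff flip: of_nat_mult)
  ultimately show ?thesis using F by simp
qed

section \<open>The randomizer\<close>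

definition block_report :: "real \<Rightarrow> (nat \<Rightarrow> nat) \<Rightarrow> nat \<Rightarrow> nat \<Rightarrow> nat set pmf" where
  "block_report eps m j x = do {
     b \<leftarrow> bernoulli_pmf (pp eps m j);
     if b then map_pmf (insert (x mod m j))
       (pmf_of_set {S. S \<subseteq> {0..<m j} - {x mod m j} \<and> card S = omega eps m j - 1})
     else pmf_of_set {Z. Z \<subseteq> {0..<m j} - {x mod m j} \<and> card Z = omega eps m j} }"

lemma mech_eq_bind_block_report:
  "mech eps m l x = pmf_of_set {0..<l} \<bind> (\<lambda>J. map_pmf (Pair J) (block_report eps m J x))"
  unfolding mech_def block_report_def Let_def map_bind_pmf
  by (intro bind_pmf_cong refl) (simp add: map_pmf_def bind_assoc_pmf bind_return_pmf if_distrib)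

lemma map_fst_mech: "map_pmf fst (mech eps m l x) = pmf_of_set {0..<l}"
  unfolding mech_eq_bind_block_report map_bind_pmf pmf.map_comp o_def
  by (simp add: map_pmf_const bind_return_pmf')

lemma omega_less_modulus:
  assumes eps: "eps > 0" and m: "m j \<ge> 2"
  shows "omega eps m j < m j"
proof -
  let ?y = "real (m j) / (exp eps + 1)"
  have "?y < real (m j) / 2"
    by (rule divide_strict_left_mono) (use eps m in \<open>simp_all add: add_pos_pos\<close>)
  then have "round ?y < int (m j)" unfolding round_def using m by linarith
  then show ?thesis unfolding omega_def using m by linarith
qed

lemma pp_bounds:
  assumes "omega eps m j < m j"
  shows "0 \<le> pp eps m j" "pp eps m j \<le> 1"
proof -
  let ?w = "real (omega eps m j)" and ?M = "real (m j)"
  have "?w * exp eps \<ge> 0" by simp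
  then have D: "?w * exp eps + ?M - ?w > 0" using assms by linarith
  then show "0 \<le> pp eps m j" unfolding pp_def Let_def by simp
  show "pp eps m j \<le> 1" unfolding pp_def Let_def using D assms by simp
qed

(* q_j is the probability that a fixed wrong residue is reported: with probability p_j it is one of
   omega_j - 1, otherwise one of omega_j, residues drawn from the m_j - 1 wrong ones. *)
lemma qq_eq_mixture:
  assumes w: "omega eps m j < m j" and m: "m j \<ge> 2"
  shows "qq eps m j = real (omega eps m j - 1) / real (m j - 1) * pp eps m j
           + real (omega eps m j) / real (m j - 1) * (1 - pp eps m j)"
proof (cases "omega eps m j = 0")
  case True
  then show ?thesis unfolding pp_def qq_def Let_def by simp
next
  case False
  let ?w = "real (omega eps m j)" and ?M = "real (m j)" and ?E = "exp eps"
  have "?w * ?E \<ge> 0" by simp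
  then have D: "?w * ?E + ?M - ?w \<noteq> 0" using w by linarith
  have "?M - 1 \<noteq> 0" using m by simp
  with D False m show ?thesis unfolding pp_def qq_def Let_def
    by (simp add: of_nat_diff divide_simps)
qed

lemma prob_block_report_mem:
  assumes eps: "eps > 0" and m: "m j \<ge> 2" and a: "a < m j"
  shows "measure_pmf.prob (block_report eps m j x) {Z. a \<in> Z}
    = (if x mod m j = a then pp eps m j else qq eps m j)"
proof -
  define r where "r = x mod m j"
  define w where "w = omega eps m j"
  define B where "B = {0..<m j} - {r}"
  define S1 where "S1 = {S. S \<subseteq> B \<and> card S = w - 1}"
  define S0 where "S0 = {S. S \<subseteq> B \<and> card S = w}"
  have B: "finite B" "card B = m j - 1" unfolding B_def r_def using m by auto
  have w: "w < m j" unfolding w_def using omega_less_modulus[of eps m j, OF eps m] .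
  note p = pp_bounds[OF w[unfolded w_def]]
  have "measure_pmf.prob (block_report eps m j x) {Z. a \<in> Z} =
     measure_pmf.prob (pmf_of_set S1) {S. a = r \<or> a \<in> S} * pp eps m j
     + measure_pmf.prob (pmf_of_set S0) {S. a \<in> S} * (1 - pp eps m j)"
    unfolding block_report_def measure_bind_pmf_eq_expectation
    using p by (simp add: vimage_def S1_def S0_def B_def r_def w_def)
  also have "\<dots> = (if x mod m j = a then pp eps m j else qq eps m j)"
  proof (cases "a = r")
    case True
    have "card S0 > 0" unfolding S0_def using w B by (simp add: n_subsets)
    then have "S0 \<noteq> {}" "finite S0" by (auto simp: card_gt_0_iff)
    then have "measure_pmf.prob (pmf_of_set S0) {S. a \<in> S} = 0"
      unfolding measure_pmf_zero_iff using True by (auto simp: S0_def B_def)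
    then show ?thesis using True by (simp add: r_def)
  next
    case False
    then have aB: "a \<in> B" unfolding B_def using a by simp
    have "measure_pmf.prob (pmf_of_set S1) {S. a = r \<or> a \<in> S} = real (w - 1) / real (m j - 1)"
      using prob_pmf_of_subsets_mem[OF B(1) aB] w B False by (simp add: S1_def)
    moreover have "measure_pmf.prob (pmf_of_set S0) {S. a \<in> S} = real w / real (m j - 1)"
      using prob_pmf_of_subsets_mem[OF B(1) aB] w B by (simp add: S0_def)
    ultimately show ?thesis
      using False qq_eq_mixture[OF w[unfolded w_def] m] by (simp add: r_def w_def mult.commute)
  qed
  finally show ?thesis .
qed

lemma prob_mech_mem:
  assumes eps: "eps > 0" and j: "j < l" and m: "m j \<ge> 2" and a: "a < m j"
  shows "measure_pmf.prob (mech eps m l x) {r. fst r = j \<and> a \<in> snd r}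
     = (if x mod m j = a then pp eps m j else qq eps m j) / real l"
proof -
  have "measure_pmf.prob (mech eps m l x) {r. fst r = j \<and> a \<in> snd r}
      = (\<Sum>J\<in>{0..<l}. measure_pmf.prob (block_report eps m J x) (Pair J -` {r. fst r = j \<and> a \<in> snd r}))
        / real l"
    unfolding mech_eq_bind_block_report measure_bind_pmf_eq_expectation
    using j by (simp add: integral_pmf_of_set)
  also have "(\<Sum>J\<in>{0..<l}. measure_pmf.prob (block_report eps m J x) (Pair J -` {r. fst r = j \<and> a \<in> snd r}))
      = (\<Sum>J\<in>{0..<l}. if J = j then measure_pmf.prob (block_report eps m j x) {Z. a \<in> Z} else 0)"
    by (intro sum.cong refl) (auto simp: vimage_def)
  also have "\<dots> = measure_pmf.prob (block_report eps m j x) {Z. a \<in> Z}"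
    using j by simp
  finally show ?thesis using prob_block_report_mem[where m=m and j=j, OF eps m a] by simp
qed

lemma offset_mono: "i \<le> j \<Longrightarrow> offset m i \<le> offset m j"
  unfolding offset_def by (rule sum_mono2) auto

lemma blk_bounds:
  assumes t: "t < TT m l"
  shows "blk m t < l" "offset m (blk m t) \<le> t" "t < offset m (Suc (blk m t))"
proof -
  have l: "l > 0" using t unfolding TT_def offset_def by (cases l) auto
  have ex: "t < offset m (Suc (l - 1))" using t l unfolding TT_def by simp
  have "blk m t \<le> l - 1" unfolding blk_def using ex by (rule Least_le)
  then show "blk m t < l" using l by simp
  show "t < offset m (Suc (blk m t))" unfolding blk_def using ex by (rule LeastI)
  show "offset m (blk m t) \<le> t"
  proof (cases "blk m t")
    case (Suc b)
    have "\<not> t < offset m (Suc b)"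
      using Suc not_less_Least[of b "\<lambda>j. t < offset m (Suc j)"] unfolding blk_def by simp
    then show ?thesis using Suc by simp
  qed (simp add: offset_def)
qed

lemma pos_less_modulus: "t < TT m l \<Longrightarrow> pos m t < m (blk m t)"
  using blk_bounds[of t m l] unfolding pos_def offset_def by simp

lemma blk_eqI:
  assumes "offset m j \<le> t" "t < offset m (Suc j)"
  shows "blk m t = j"
  unfolding blk_def
proof (rule Least_equality)
  fix y assume y: "t < offset m (Suc y)"
  show "j \<le> y"
  proof (rule ccontr)
    assume "\<not> j \<le> y"
    then have "offset m (Suc y) \<le> offset m j" by (intro offset_mono) simp
    then show False using assms y by linarith
  qed
qed (use assms in simp)

lemma card_blk_eq:
  assumes j: "j < l"
  shows "card {t. t < TT m l \<and> blk m t = j} = m j"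
proof -
  have "offset m (Suc j) \<le> TT m l" unfolding TT_def using j by (intro offset_mono) simp
  have "{t. t < TT m l \<and> blk m t = j} = {offset m j..<offset m (Suc j)}"
  proof (intro Set.set_eqI iffI)
    fix t assume "t \<in> {t. t < TT m l \<and> blk m t = j}"
    then show "t \<in> {offset m j..<offset m (Suc j)}" using blk_bounds(2,3)[of t m l] by auto
  next
    fix t assume "t \<in> {offset m j..<offset m (Suc j)}"
    then show "t \<in> {t. t < TT m l \<and> blk m t = j}"
      using blk_eqI[of m j t] \<open>offset m (Suc j) \<le> TT m l\<close> by auto
  qed
  then show ?thesis unfolding offset_def by simp
qed

lemma Aw_mult_vec_frequencies:
  assumes t: "t < TT m l" and x: "\<And>i. i < n \<Longrightarrow> x i < k"
    and f: "\<And>v. f v = real (card {i. i < n \<and> x i = v}) / real n"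
  shows "(Aw eps m l k N *\<^sub>v vec k f) $ t
    = sqrt (wt eps m N (blk m t)) * (real (card {i. i < n \<and> x i mod m (blk m t) = pos m t}) / real n)"
proof -
  have "(Aw eps m l k N *\<^sub>v vec k f) $ t
      = (\<Sum>y<k. sqrt (wt eps m N (blk m t)) * (if y mod m (blk m t) = pos m t then f y else 0))"
    using t by (simp add: Aw_def Amat_def scalar_prod_def atLeast0LessThan) (intro sum.cong refl, simp)
  also have "\<dots> = (\<Sum>y<k. sqrt (wt eps m N (blk m t)) *
      ((if y mod m (blk m t) = pos m t then real (card {i. i < n \<and> x i = y}) else 0) / real n))"
    by (intro sum.cong refl) (simp add: f)
  also have "\<dots> = sqrt (wt eps m N (blk m t)) *
      ((\<Sum>y<k. if y mod m (blk m t) = pos m t then real (card {i. i < n \<and> x i = y}) else 0) / real n)"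
    by (simp add: sum_distrib_left sum_divide_distrib)
  finally show ?thesis using sum_card_fibres_mod[OF x] by simp
qed

section \<open>Conditioning on the block counts\<close>

definition block_indices :: "nat \<Rightarrow> nat \<Rightarrow> (nat \<Rightarrow> nat) pmf" where
  "block_indices n l = Pi_pmf {0..<n} 0 (\<lambda>_. pmf_of_set {0..<l})"

definition block_count_event :: "nat \<Rightarrow> nat \<Rightarrow> (nat \<Rightarrow> nat) \<Rightarrow> (nat \<Rightarrow> nat) set" where
  "block_count_event n l N = {g. \<forall>j<l. card {i. i < n \<and> g i = j} = N j}"

lemma blockcount_event_eq_vimage:
  "{\<rho>. \<forall>j<l. blockcount n \<rho> j = N j} = (\<lambda>\<rho>. fst \<circ> \<rho>) -` block_count_event n l N"
  unfolding block_count_event_def blockcount_def by auto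

lemma map_reports_block_indices:
  "map_pmf (\<lambda>\<rho>. fst \<circ> \<rho>) (reports eps m l n x) = block_indices n l"
proof -
  have "map_pmf (\<lambda>\<rho>. fst \<circ> \<rho>) (reports eps m l n x)
      = Pi_pmf {0..<n} 0 (\<lambda>i. map_pmf fst (mech eps m l (x i)))"
    unfolding reports_def by (subst Pi_pmf_map[of "{0..<n}" fst "(0, {})" 0]) auto
  then show ?thesis unfolding block_indices_def map_fst_mech .
qed

lemma prob_block_indices_swap:
  assumes i: "i < n" and i': "i' < n"
  shows "measure_pmf.prob (block_indices n l) ({g. g i = j} \<inter> block_count_event n l N)
    = measure_pmf.prob (block_indices n l) ({g. g i' = j} \<inter> block_count_event n l N)"
proof -
  define h where "h = Transposition.transpose i i'"
  have hh: "h (h t) = t" and hn: "t < n \<Longrightarrow> h t < n" for t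
    unfolding h_def using i i' by (auto simp: Transposition.transpose_def)
  have "bij_betw h {0..<n} {0..<n}"
    by (rule bij_betwI[where g=h]) (auto simp: hh hn)
  moreover have "x \<notin> {0..<n} \<Longrightarrow> h x \<notin> {0..<n}" for x
    unfolding h_def using i i' by (auto simp: Transposition.transpose_def)
  ultimately have swap: "block_indices n l = map_pmf (\<lambda>g. g \<circ> h) (block_indices n l)"
    unfolding block_indices_def by (intro Pi_pmf_bij_betw) simp_all
  have "card {t. t < n \<and> g (h t) = j'} = card {t. t < n \<and> g t = j'}" for g :: "nat \<Rightarrow> nat" and j'
    by (rule bij_betw_same_card[of h], rule bij_betwI[where g=h]) (auto simp: hh hn)
  then have "(\<lambda>g. g \<circ> h) -` ({g. g i = j} \<inter> block_count_event n l N)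
      = {g. g i' = j} \<inter> block_count_event n l N"
    unfolding block_count_event_def by (auto simp: h_def)
  then show ?thesis by (subst swap) simp
qed

(* The event is invariant under permuting users, so all users have the same probability of lying
   in block j, and summed over the users these probabilities count N j. *)
lemma prob_block_indices_count_event:
  assumes i: "i < n" and j: "j < l"
  shows "measure_pmf.prob (block_indices n l) ({g. g i = j} \<inter> block_count_event n l N)
    = real (N j) / real n * measure_pmf.prob (block_indices n l) (block_count_event n l N)"
proof -
  let ?P = "measure_pmf.prob (block_indices n l)" and ?E = "block_count_event n l N"
  have "real (card {i\<in>{..<n}. g \<in> {g. g i = j} \<inter> ?E}) = real (N j) * indicator ?E g" for g
    using j by (cases "g \<in> ?E") (auto simp: block_count_event_def conj_commute)
  then have "(\<Sum>i'<n. ?P ({g. g i' = j} \<inter> ?E))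
      = measure_pmf.expectation (block_indices n l) (\<lambda>g. real (N j) * indicator ?E g)"
    using expectation_card_events[of "{..<n}" "block_indices n l" "\<lambda>i. {g. g i = j} \<inter> ?E"] by simp
  also have "\<dots> = real (N j) * ?P ?E" by simp
  finally have "(\<Sum>i'<n. ?P ({g. g i' = j} \<inter> ?E)) = real (N j) * ?P ?E" .
  moreover have "(\<Sum>i'<n. ?P ({g. g i' = j} \<inter> ?E)) = real n * ?P ({g. g i = j} \<inter> ?E)"
    using prob_block_indices_swap[OF _ i] by simp
  ultimately show ?thesis using i by (simp add: field_simps)
qed

lemma prob_block_count_event_pos:
  assumes "(\<Sum>j<l. N j) = n"
  shows "measure_pmf.prob (block_indices n l) (block_count_event n l N) > 0"
proof -
  have n: "n = TT N l" unfolding TT_def offset_def using assms by simp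
  \<comment> \<open>Filling the blocks consecutively, as the rows of the design matrix are stacked.\<close>
  define g where "g i = (if i < n then blk N i else 0)" for i
  have "{i. i < n \<and> g i = j} = {i. i < TT N l \<and> blk N i = j}" for j
    unfolding g_def n by auto
  then have "g \<in> block_count_event n l N"
    unfolding block_count_event_def using card_blk_eq[of _ l N] by simp
  moreover have "g i \<in> set_pmf (pmf_of_set {0..<l})" if "i < n" for i
    using that blk_bounds(1)[of i N l] by (simp add: g_def n)
  then have "g \<in> set_pmf (block_indices n l)"
    unfolding block_indices_def by (subst set_Pi_pmf) (auto simp: PiE_dflt_def g_def)
  ultimately show ?thesis by (rule measure_pmf_posI[rotated])
qed

lemma prob_reports_factor:
  assumes i: "i < n" and Y: "\<And>y. y \<in> Y \<Longrightarrow> fst y = fst c"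
  shows "measure_pmf.prob (reports eps m l n x) ({\<rho>. \<rho> i \<in> Y} \<inter> (\<lambda>\<rho>. fst \<circ> \<rho>) -` G)
    = measure_pmf.prob (mech eps m l (x i)) Y *
      measure_pmf.prob (Pi_pmf ({0..<n} - {i}) (0, {}) (\<lambda>i. mech eps m l (x i)))
        {f. fst \<circ> f(i := c) \<in> G}"
proof -
  let ?R' = "Pi_pmf ({0..<n} - {i}) (0, {}) (\<lambda>i. mech eps m l (x i))"
  have "{0..<n} = insert i ({0..<n} - {i})" using i by auto
  then have R: "reports eps m l n x = map_pmf (\<lambda>(y, f). f(i := y)) (pair_pmf (mech eps m l (x i)) ?R')"
    unfolding reports_def by (metis Pi_pmf_insert finite_Diff finite_atLeastLessThan Diff_iff insertI1)
  have "fst \<circ> f(i := y) = fst \<circ> f(i := c)" if "y \<in> Y" for f y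
    using Y[OF that] by (simp add: fun_eq_iff)
  then have "(\<lambda>(y, f). f(i := y)) -` ({\<rho>. \<rho> i \<in> Y} \<inter> (\<lambda>\<rho>. fst \<circ> \<rho>) -` G)
      = Y \<times> {f. fst \<circ> f(i := c) \<in> G}"
    by auto
  then show ?thesis unfolding R by (simp add: measure_pair_pmf_Times)
qed

lemma prob_reports_mem_count_event:
  assumes eps: "eps > 0" and i: "i < n" and j: "j < l" and m: "m j \<ge> 2" and a: "a < m j"
  shows "measure_pmf.prob (reports eps m l n x)
      ({\<rho>. fst (\<rho> i) = j \<and> a \<in> snd (\<rho> i)} \<inter> (\<lambda>\<rho>. fst \<circ> \<rho>) -` block_count_event n l N)
    = (if x i mod m j = a then pp eps m j else qq eps m j) * (real (N j) / real n)
      * measure_pmf.prob (block_indices n l) (block_count_event n l N)"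
proof -
  let ?R = "reports eps m l n x" and ?E = "block_count_event n l N"
  let ?X = "measure_pmf.prob (Pi_pmf ({0..<n} - {i}) (0, {}) (\<lambda>i. mech eps m l (x i)))
    {f. fst \<circ> f(i := (j, {})) \<in> ?E}"
  have "measure_pmf.prob (mech eps m l (x i)) {r. fst r = j}
      = measure_pmf.prob (map_pmf fst (mech eps m l (x i))) {j}"
    by (simp add: vimage_def)
  also have "\<dots> = 1 / real l" unfolding map_fst_mech using j by (simp add: measure_pmf_of_set)
  finally have "measure_pmf.prob ?R ({\<rho>. \<rho> i \<in> {r. fst r = j}} \<inter> (\<lambda>\<rho>. fst \<circ> \<rho>) -` ?E) = ?X / real l"
    using prob_reports_factor[OF i, of "{r. fst r = j}" "(j, {})"] by simp
  moreover have "{\<rho>. \<rho> i \<in> {r. fst r = j}} \<inter> (\<lambda>\<rho>. fst \<circ> \<rho>) -` ?E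
      = (\<lambda>\<rho>. fst \<circ> \<rho>) -` ({g. g i = j} \<inter> ?E)"
    by auto
  ultimately have "?X / real l = measure_pmf.prob (block_indices n l) ({g. g i = j} \<inter> ?E)"
    by (simp flip: map_reports_block_indices[of eps m l n x])
  also have "\<dots> = real (N j) / real n * measure_pmf.prob (block_indices n l) ?E"
    by (rule prob_block_indices_count_event[OF i j])
  finally have X: "?X / real l = \<dots>" .
  have "measure_pmf.prob ?R ({\<rho>. \<rho> i \<in> {r. fst r = j \<and> a \<in> snd r}} \<inter> (\<lambda>\<rho>. fst \<circ> \<rho>) -` ?E)
      = (if x i mod m j = a then pp eps m j else qq eps m j) * (?X / real l)"
    using prob_reports_factor[OF i, of "{r. fst r = j \<and> a \<in> snd r}" "(j, {})"]
      prob_mech_mem[where m=m and j=j, OF eps j m a] by simp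
  then show ?thesis unfolding X by simp
qed

definition reports_given_counts ::
    "real \<Rightarrow> (nat \<Rightarrow> nat) \<Rightarrow> nat \<Rightarrow> nat \<Rightarrow> (nat \<Rightarrow> nat) \<Rightarrow> (nat \<Rightarrow> nat) \<Rightarrow> (nat \<Rightarrow> report) pmf" where
  "reports_given_counts eps m l n x N =
     cond_pmf (reports eps m l n x) {\<rho>. \<forall>j<l. blockcount n \<rho> j = N j}"

lemma blockcount_reports_given_counts:
  assumes N: "(\<Sum>j<l. N j) = n" and \<rho>: "\<rho> \<in> set_pmf (reports_given_counts eps m l n x N)"
    and j: "j < l"
  shows "blockcount n \<rho> j = N j"
proof -
  let ?R = "reports eps m l n x" and ?E = "{\<rho>. \<forall>j<l. blockcount n \<rho> j = N j}"
  have "measure_pmf.prob ?R ?E > 0"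
    unfolding blockcount_event_eq_vimage
    using prob_block_count_event_pos[OF N] by (simp flip: map_reports_block_indices[of eps m l n x])
  then have "set_pmf ?R \<inter> ?E \<noteq> {}" using measure_pmf_zero_iff[of ?R ?E] by auto
  then show ?thesis using \<rho> j unfolding reports_given_counts_def by simp
qed

lemma integrable_cnt: "integrable (measure_pmf p) (\<lambda>\<rho>. real (cnt n \<rho> j a))"
proof (rule measure_pmf.integrable_const_bound[where B="real n"])
  have "cnt n \<rho> j a \<le> card {..<n}" for \<rho> unfolding cnt_def by (intro card_mono) auto
  then show "AE \<rho> in measure_pmf p. norm (real (cnt n \<rho> j a)) \<le> real n" by simp
qed simp

lemma expectation_cnt_given_counts:
  assumes eps: "eps > 0" and N: "(\<Sum>j<l. N j) = n" and j: "j < l" and m: "m j \<ge> 2"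
    and a: "a < m j"
  shows "measure_pmf.expectation (reports_given_counts eps m l n x N) (\<lambda>\<rho>. real (cnt n \<rho> j a))
    = real (N j) / real n * (\<Sum>i<n. if x i mod m j = a then pp eps m j else qq eps m j)"
proof -
  let ?R = "reports eps m l n x" and ?V = "(\<lambda>\<rho>. fst \<circ> \<rho>) -` block_count_event n l N"
  have C: "reports_given_counts eps m l n x N = cond_pmf ?R ?V"
    unfolding reports_given_counts_def blockcount_event_eq_vimage ..
  let ?A = "\<lambda>i. {\<rho>. fst (\<rho> i) = j \<and> a \<in> snd (\<rho> i)}"
  have RV: "measure_pmf.prob ?R ?V = measure_pmf.prob (block_indices n l) (block_count_event n l N)"
    by (simp flip: map_reports_block_indices[of eps m l n x])
  then have pos: "measure_pmf.prob ?R ?V > 0" using prob_block_count_event_pos[OF N] by simp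
  then have ne: "set_pmf ?R \<inter> ?V \<noteq> {}" using measure_pmf_zero_iff[of ?R ?V] by auto
  have "real (cnt n \<rho> j a) = real (card {i\<in>{..<n}. \<rho> \<in> ?A i})" for \<rho>
    unfolding cnt_def by (simp add: conj_assoc)
  then have "measure_pmf.expectation (cond_pmf ?R ?V) (\<lambda>\<rho>. real (cnt n \<rho> j a))
      = measure_pmf.expectation (cond_pmf ?R ?V) (\<lambda>\<rho>. real (card {i\<in>{..<n}. \<rho> \<in> ?A i}))"
    by presburger
  also have "\<dots> = (\<Sum>i<n. measure_pmf.prob (cond_pmf ?R ?V) (?A i))"
    by (rule expectation_card_events) simp
  also have "\<dots> = (\<Sum>i<n. (if x i mod m j = a then pp eps m j else qq eps m j) * (real (N j) / real n))"
  proof (intro sum.cong refl)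
    fix i assume "i \<in> {..<n}"
    then show "measure_pmf.prob (cond_pmf ?R ?V) (?A i)
        = (if x i mod m j = a then pp eps m j else qq eps m j) * (real (N j) / real n)"
      using pos RV measure_cond_pmf[OF ne, of "?A i"]
        prob_reports_mem_count_event[where m=m and j=j and N=N, OF eps _ j m a, of i]
      by simp
  qed
  finally show ?thesis unfolding C by (simp add: sum_distrib_left mult.commute)
qed

section \<open>Unbiasedness\<close>

lemma stilde_nth_given_counts:
  assumes N: "(\<Sum>j<l. N j) = n" and \<rho>: "\<rho> \<in> set_pmf (reports_given_counts eps m l n x N)"
    and t: "t < TT m l"
  shows "stilde eps m l n \<rho> $ t = sqrt (wt eps m N (blk m t)) *
    ((real (cnt n \<rho> (blk m t) (pos m t)) / real (N (blk m t)) - qq eps m (blk m t))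
      / (pp eps m (blk m t) - qq eps m (blk m t)))"
proof -
  have "\<forall>j<l. blockcount n \<rho> j = N j"
    using blockcount_reports_given_counts[OF N \<rho>] by blast
  then have "wt eps m (blockcount n \<rho>) (blk m t) = wt eps m N (blk m t)"
    "blockcount n \<rho> (blk m t) = N (blk m t)"
    using blk_bounds(1)[OF t] by (simp_all add: wt_def)
  then show ?thesis using t by (simp add: stilde_def shat_def)
qed

lemma
  assumes eps: "eps > 0" and N_pos: "\<And>j. j < l \<Longrightarrow> N j \<ge> 1" and N: "(\<Sum>j<l. N j) = n"
    and m2: "\<And>j. j < l \<Longrightarrow> m j \<ge> 2" and t: "t < TT m l"
  shows integrable_stilde_given_counts:
      "integrable (reports_given_counts eps m l n x N) (\<lambda>\<rho>. stilde eps m l n \<rho> $ t)"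
    and expectation_stilde_given_counts:
      "measure_pmf.expectation (reports_given_counts eps m l n x N) (\<lambda>\<rho>. stilde eps m l n \<rho> $ t)
       = sqrt (wt eps m N (blk m t)) * (real (card {i. i < n \<and> x i mod m (blk m t) = pos m t}) / real n)"
proof -
  define j where "j = blk m t"
  define a where "a = pos m t"
  define C where "C = reports_given_counts eps m l n x N"
  define c where "c = real (card {i. i < n \<and> x i mod m j = a})"
  let ?p = "pp eps m j" and ?q = "qq eps m j" and ?w = "sqrt (wt eps m N j)"
  let ?affine = "\<lambda>\<rho>. ?w * ((real (cnt n \<rho> j a) / real (N j) - ?q) / (?p - ?q))"
  have j: "j < l" and a: "a < m j"
    unfolding j_def a_def using blk_bounds(1)[OF t] pos_less_modulus[OF t] by simp_all
  have n: "n > 0"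
    using N_pos[OF j] member_le_sum[of j "{..<l}" N] j N by simp
  have AE: "AE \<rho> in C. stilde eps m l n \<rho> $ t = ?affine \<rho>"
    unfolding C_def j_def a_def by (intro AE_pmfI stilde_nth_given_counts[OF N _ t])
  have int: "integrable C ?affine" by (intro integrable_cnt integrable_mult_right
      integrable_divide_zero Bochner_Integration.integrable_diff) simp
  then show "integrable C (\<lambda>\<rho>. stilde eps m l n \<rho> $ t)"
    using integrable_cong_AE[OF _ _ AE] by simp
  have "measure_pmf.expectation C (\<lambda>\<rho>. stilde eps m l n \<rho> $ t) = measure_pmf.expectation C ?affine"
    using AE by (intro integral_cong_AE) simp_all
  also have "\<dots> = ?w * ((measure_pmf.expectation C (\<lambda>\<rho>. real (cnt n \<rho> j a)) / real (N j) - ?q) / (?p - ?q))"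
    using integrable_cnt by (simp add: Bochner_Integration.integral_diff)
  also have "\<dots> = ?w * (c / real n)"
  proof (cases "?p = ?q")
    case False
    have E: "measure_pmf.expectation C (\<lambda>\<rho>. real (cnt n \<rho> j a))
        = real (N j) / real n * (real n * ?q + (?p - ?q) * c)"
      unfolding C_def c_def
      by (simp add: expectation_cnt_given_counts[where m=m and j=j, OF eps N j m2[OF j] a] sum_if_eq_card)
    show ?thesis unfolding E using False n N_pos[OF j] by (simp add: field_simps)
  qed (simp add: wt_def) \<comment> \<open>if \<open>p = q\<close> then \<open>hat s\<close> divides by zero, but its weight vanishes\<close>
  finally show "measure_pmf.expectation C (\<lambda>\<rho>. stilde eps m l n \<rho> $ t) = \<dots>"
    unfolding c_def j_def a_def .
qed

lemma fhat_given_counts: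
  assumes N: "(\<Sum>j<l. N j) = n" and \<rho>: "\<rho> \<in> set_pmf (reports_given_counts eps m l n x N)"
    and inv: "mat_inverse ((Aw eps m l k N)\<^sup>T * Aw eps m l k N) = Some B"
  shows "fhat eps m l k n \<rho> = (B * (Aw eps m l k N)\<^sup>T) *\<^sub>v stilde eps m l n \<rho>"
proof -
  let ?A = "Aw eps m l k N"
  have "wt eps m (blockcount n \<rho>) (blk m t) = wt eps m N (blk m t)" if "t < TT m l" for t
    using blockcount_reports_given_counts[OF N \<rho> blk_bounds(1)[OF that]] by (simp add: wt_def)
  then have Aw_eq: "Aw eps m l k (blockcount n \<rho>) = ?A" by (intro eq_matI) (simp_all add: Aw_def)
  have A: "?A \<in> carrier_mat (TT m l) k" by (simp add: Aw_def)
  then have "?A\<^sup>T * ?A \<in> carrier_mat k k" by simp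
  then have B: "B \<in> carrier_mat k k" using mat_inverse(2) inv by blast
  have "stilde eps m l n \<rho> \<in> carrier_vec (TT m l)" by (simp add: stilde_def)
  then show ?thesis
    unfolding fhat_def Let_def Aw_eq inv using A B by (simp add: assoc_mult_mat_vec)
qed

lemma expectation_stilde_vec_given_counts:
  assumes eps: "eps > 0" and N_pos: "\<And>j. j < l \<Longrightarrow> N j \<ge> 1" and N: "(\<Sum>j<l. N j) = n"
    and m2: "\<And>j. j < l \<Longrightarrow> m j \<ge> 2" and x: "\<And>i. i < n \<Longrightarrow> x i < k"
    and f: "\<And>v. f v = real (card {i. i < n \<and> x i = v}) / real n"
  shows "vec (TT m l) (\<lambda>t. measure_pmf.expectation (reports_given_counts eps m l n x N)
      (\<lambda>\<rho>. stilde eps m l n \<rho> $ t)) = Aw eps m l k N *\<^sub>v vec k f"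
proof (rule eq_vecI)
  fix t assume "t < dim_vec (Aw eps m l k N *\<^sub>v vec k f)"
  then have t: "t < TT m l" by (simp add: Aw_def)
  then show "vec (TT m l) (\<lambda>t. measure_pmf.expectation (reports_given_counts eps m l n x N)
      (\<lambda>\<rho>. stilde eps m l n \<rho> $ t)) $ t = (Aw eps m l k N *\<^sub>v vec k f) $ t"
    using Aw_mult_vec_frequencies[OF t x f] expectation_stilde_given_counts[OF eps N_pos N m2 t]
    by simp
qed (simp add: Aw_def)

theorem theorem2:
  fixes eps :: real and m :: "nat \<Rightarrow> nat" and l k n :: nat
    and x :: "nat \<Rightarrow> nat" and f :: "nat \<Rightarrow> real" and N :: "nat \<Rightarrow> nat"
  assumes eps: "eps > 0"
    and l: "l \<ge> 1"
    and m2: "\<And>j. j < l \<Longrightarrow> m j \<ge> 2"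
    and coprime: "\<And>i j. i < l \<Longrightarrow> j < l \<Longrightarrow> i \<noteq> j \<Longrightarrow> coprime (m i) (m j)"
    and x: "\<And>i. i < n \<Longrightarrow> x i < k"
    and f: "\<And>v. f v = real (card {i. i < n \<and> x i = v}) / real n"
    and N_pos: "\<And>j. j < l \<Longrightarrow> N j \<ge> 1"
    and N_sum: "(\<Sum>j<l. N j) = n"
    and full_rank: "vec_space.rank (TT m l) (Aw eps m l k N) = k"
  shows "\<forall>v < k. measure_pmf.expectation
            (cond_pmf (reports eps m l n x) {\<rho>. \<forall>j<l. blockcount n \<rho> j = N j})
            (\<lambda>\<rho>. fhat eps m l k n \<rho> $ v) = f v"
  unfolding reports_given_counts_def[symmetric]
proof (intro allI impI)
  fix v assume v: "v < k"
  let ?A = "Aw eps m l k N" and ?C = "reports_given_counts eps m l n x N"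
  have A: "?A \<in> carrier_mat (TT m l) k" by (simp add: Aw_def)
  obtain B where inv: "mat_inverse (?A\<^sup>T * ?A) = Some B"
    and B: "B * (?A\<^sup>T * ?A) = 1\<^sub>m k" "B \<in> carrier_mat k k"
    using gram_mat_inverse[OF A full_rank] .
  let ?M = "B * ?A\<^sup>T"
  have M: "?M \<in> carrier_mat k (TT m l)" using A B by simp
  have MA: "?M * ?A = 1\<^sub>m k" using A B by (simp add: assoc_mult_mat[of B k k _ "TT m l"])
  have "measure_pmf.expectation ?C (\<lambda>\<rho>. fhat eps m l k n \<rho> $ v)
      = measure_pmf.expectation ?C (\<lambda>\<rho>. (?M *\<^sub>v stilde eps m l n \<rho>) $ v)"
    by (intro integral_cong_AE AE_pmfI) (simp_all add: fhat_given_counts[OF N_sum _ inv])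
  also have "\<dots> = (?M *\<^sub>v vec (TT m l) (\<lambda>t. measure_pmf.expectation ?C (\<lambda>\<rho>. stilde eps m l n \<rho> $ t))) $ v"
    using M v by (intro integral_index_mult_mat_vec integrable_stilde_given_counts[OF eps N_pos N_sum m2])
      (simp_all add: stilde_def)
  also have "\<dots> = (?M *\<^sub>v (?A *\<^sub>v vec k f)) $ v"
    using expectation_stilde_vec_given_counts[OF eps N_pos N_sum m2 x f] by simp
  also have "\<dots> = f v" using A M MA v by (simp flip: assoc_mult_mat_vec)
  finally show "measure_pmf.expectation ?C (\<lambda>\<rho>. fhat eps m l k n \<rho> $ v) = f v" .
qed

end
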